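(* Let $r:V\times V\to\{0,1\}$. If an undirected edge set (multigraph) $H$ on $V$ covers $f_r$, i.e., $d_H(X)\ge f_r(X)$ for all $X\subseteq V$, then $H$ has an orientation $D$ such that $D$ contains a directed $uv$-path for every $(u,v)$ with $r(u,v)=1$.
   Context: For $X\subseteq V$ let $\bar X=V\setminus X$, and $d_H(X)$ the number of edges of $H$ with one endpoint in $X$ and the other in $\bar X$. The set function $f_r$ is defined by $f_r(\emptyset)=f_r(V)=0$ and, for $\emptyset\ne X\subsetneq V$, $f_r(X)=\max\{r(u,v):u\in X,v\in\bar X\}+\max\{r(v,u):u\in X,v\in\bar X\}$. *)

theory Defs
  imports Main
begin

text \<open>A multigraph H on V is a list of edges (pairs of vertices of V); the order
  of the two endpoints of an undirected edge is irrelevant. Parallel edges are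
  repeated list entries.\<close>

definition cut_deg :: "'a set \<Rightarrow> ('a \<times> 'a) list \<Rightarrow> 'a set \<Rightarrow> nat" where
  "cut_deg V H X = length (filter (\<lambda>(a, b). (a \<in> X \<and> b \<in> V - X) \<or> (b \<in> X \<and> a \<in> V - X)) H)"

definition f_r :: "'a set \<Rightarrow> ('a \<Rightarrow> 'a \<Rightarrow> nat) \<Rightarrow> 'a set \<Rightarrow> nat" where
  "f_r V r X = (if X = {} \<or> X = V then 0
     else Max {r u v | u v. u \<in> X \<and> v \<in> V - X} + Max {r v u | u v. u \<in> X \<and> v \<in> V - X})"

definition is_orientation :: "('a \<times> 'a) list \<Rightarrow> ('a \<times> 'a) list \<Rightarrow> bool" where
  "is_orientation H D = list_all2 (\<lambda>e d. d = e \<or> d = prod.swap e) H D"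

definition has_dipath :: "('a \<times> 'a) list \<Rightarrow> 'a \<Rightarrow> 'a \<Rightarrow> bool" where
  "has_dipath D u v = ((u, v) \<in> (set D)\<^sup>*)"

end

theory Submission
  imports Defs
begin

(* Requirements are treated as a relation R (here R u v iff r u v = 1), and
   the demand of a cut X counts whether some requirement leaves X and whether some requirement
   enters X; for 0/1-valued r this is exactly f_r. So the hypothesis says that H covers the
   demand of every cut, and we show that covering implies a good orientation, by induction on
   the number of non-loop edges of H, for all vertex sets and requirement relations at once.
   - If all edges are loops, covering forces every requirement to be trivial.
   - Otherwise take a non-loop edge ab (moved to the front of the edge list).
     If ab is a bridge of the undirected graph, let A be the side of a. As d(A) = 1, the
     requirements cross A in one direction only; we orient ab that way, split each crossing
     requirement at the bridge, and show that H - ab covers the new requirements.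
     If ab lies on a cycle, we contract the cycle formed by ab and a shortest a-b path in H - ab
     to a single vertex; the contraction covers the induced requirements and has fewer non-loop
     edges, and its orientation lifts back by orienting the cycle cyclically. *)

definition leaves :: "'a set \<Rightarrow> ('a \<Rightarrow> 'a \<Rightarrow> bool) \<Rightarrow> 'a set \<Rightarrow> bool" where
  "leaves V R X \<longleftrightarrow> (\<exists>u\<in>X. \<exists>v\<in>V - X. R u v)"

definition demand :: "'a set \<Rightarrow> ('a \<Rightarrow> 'a \<Rightarrow> bool) \<Rightarrow> 'a set \<Rightarrow> nat" where
  "demand V R X = of_bool (leaves V R X) + of_bool (leaves V R\<inverse>\<inverse> X)"

definition covers :: "'a set \<Rightarrow> ('a \<Rightarrow> 'a \<Rightarrow> bool) \<Rightarrow> ('a \<times> 'a) list \<Rightarrow> bool" where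
  "covers V R H \<longleftrightarrow> (\<forall>X. X \<subseteq> V \<longrightarrow> demand V R X \<le> cut_deg V H X)"

definition orientable :: "'a set \<Rightarrow> ('a \<Rightarrow> 'a \<Rightarrow> bool) \<Rightarrow> ('a \<times> 'a) list \<Rightarrow> bool" where
  "orientable V R H \<longleftrightarrow>
     (\<exists>D. is_orientation H D \<and> (\<forall>u\<in>V. \<forall>v\<in>V. R u v \<longrightarrow> (u, v) \<in> (set D)\<^sup>*))"

lemma Max_01:
  assumes "finite S" and "S \<noteq> {}" and "S \<subseteq> {0, 1 :: nat}"
  shows "Max S = of_bool (1 \<in> S)"
proof (cases "1 \<in> S")
  case True
  then show ?thesis using assms by (auto intro!: Max_eqI)
next
  case False
  then have "S = {0}" using assms by auto
  then show ?thesis by simp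
qed

lemma Max_cut_01:
  fixes g :: "'a \<Rightarrow> 'a \<Rightarrow> nat"
  assumes "finite V" and "X \<subseteq> V" and "X \<noteq> {}" and "X \<noteq> V"
    and "\<forall>u\<in>V. \<forall>v\<in>V. g u v \<in> {0, 1}"
  shows "Max {g u v | u v. u \<in> X \<and> v \<in> V - X} = of_bool (\<exists>u\<in>X. \<exists>v\<in>V - X. g u v = 1)"
proof -
  let ?S = "{g u v | u v. u \<in> X \<and> v \<in> V - X}"
  have "?S = case_prod g ` (X \<times> (V - X))" by auto
  moreover have "finite (X \<times> (V - X))"
    using assms(1,2) by (meson finite_Diff finite_SigmaI finite_subset)
  ultimately have "finite ?S" by simp
  moreover have "?S \<noteq> {}" using assms(2-4) by blast
  moreover have "?S \<subseteq> {0, 1}" using assms(2,5) by fastforce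
  ultimately have "Max ?S = of_bool (1 \<in> ?S)" by (rule Max_01)
  also have "(1 \<in> ?S) = (\<exists>u\<in>X. \<exists>v\<in>V - X. g u v = 1)" by (auto simp: eq_commute)
  finally show ?thesis .
qed

lemma f_r_eq_demand:
  assumes "finite V" and "\<forall>u\<in>V. \<forall>v\<in>V. r u v \<in> {0, 1}" and "X \<subseteq> V"
  shows "f_r V r X = demand V (\<lambda>u v. r u v = 1) X"
proof (cases "X = {} \<or> X = V")
  case True
  then show ?thesis by (auto simp: f_r_def demand_def leaves_def)
next
  case False
  have "\<forall>u\<in>V. \<forall>v\<in>V. (\<lambda>u v. r v u) u v \<in> {0, 1}" using assms(2) by blast
  from Max_cut_01[OF assms(1,3) _ _ assms(2)] Max_cut_01[OF assms(1,3) _ _ this] False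
  show ?thesis by (simp add: f_r_def demand_def leaves_def)
qed

lemma demand_mono:
  assumes "leaves V R X \<Longrightarrow> leaves V' R' X'" and "leaves V R\<inverse>\<inverse> X \<Longrightarrow> leaves V' R'\<inverse>\<inverse> X'"
  shows "demand V R X \<le> demand V' R' X'"
  using assms by (auto simp: demand_def)

lemma demand_subadditive:
  assumes "leaves V R X \<Longrightarrow> leaves V R X1 \<or> leaves V R X2"
    and "leaves V R\<inverse>\<inverse> X \<Longrightarrow> leaves V R\<inverse>\<inverse> X1 \<or> leaves V R\<inverse>\<inverse> X2"
  shows "demand V R X \<le> demand V R X1 + demand V R X2"
  using assms by (auto simp: demand_def)

lemma leaves_complement:
  assumes "X \<subseteq> V"
  shows "leaves V R X \<longleftrightarrow> leaves V R\<inverse>\<inverse> (V - X)"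
  using assms by (auto simp: leaves_def)

lemma leaves_witness: "u \<in> X \<Longrightarrow> v \<in> V - X \<Longrightarrow> R u v \<Longrightarrow> leaves V R X"
  unfolding leaves_def by blast

definition crosses :: "'a set \<Rightarrow> 'a set \<Rightarrow> 'a \<times> 'a \<Rightarrow> bool" where
  "crosses V X = (\<lambda>(a, b). (a \<in> X \<and> b \<in> V - X) \<or> (b \<in> X \<and> a \<in> V - X))"

lemma cut_deg_filter: "cut_deg V H X = length (filter (crosses V X) H)"
  by (simp add: cut_deg_def crosses_def)

lemma cut_deg_Cons: "cut_deg V (e # H) X = of_bool (crosses V X e) + cut_deg V H X"
  by (simp add: cut_deg_filter)

lemma cut_deg_append: "cut_deg V (H1 @ H2) X = cut_deg V H1 X + cut_deg V H2 X"
  by (simp add: cut_deg_filter)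

lemma crosses_swap: "crosses V X (prod.swap e) = crosses V X e"
  by (cases e) (auto simp: crosses_def)

lemma cut_deg_cong:
  "(\<And>e. e \<in> set H \<Longrightarrow> crosses V X e \<longleftrightarrow> crosses V' X' e) \<Longrightarrow> cut_deg V H X = cut_deg V' H X'"
  unfolding cut_deg_filter by (metis filter_cong)

lemma cut_deg_split:
  "(\<And>e. e \<in> set H \<Longrightarrow> (crosses V X e \<longleftrightarrow> crosses V X1 e \<or> crosses V X2 e) \<and>
                         \<not> (crosses V X1 e \<and> crosses V X2 e))
   \<Longrightarrow> cut_deg V H X = cut_deg V H X1 + cut_deg V H X2"
  unfolding cut_deg_filter by (induction H) auto

lemma cut_deg_zero: "(\<And>e. e \<in> set H \<Longrightarrow> \<not> crosses V X e) \<Longrightarrow> cut_deg V H X = 0"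
  unfolding cut_deg_filter by simp

lemma cut_deg_sides:
  assumes sep: "\<forall>(p, q)\<in>set G. p \<in> V \<and> q \<in> V \<and> (p \<in> A \<longleftrightarrow> q \<in> A)"
  shows "cut_deg V G Y = cut_deg V G (Y \<inter> A) + cut_deg V G (Y - A)"
proof (rule cut_deg_split)
  fix e assume "e \<in> set G"
  with sep obtain p q where "e = (p, q)" "p \<in> V" "q \<in> V" "p \<in> A \<longleftrightarrow> q \<in> A" by auto
  then show "(crosses V Y e \<longleftrightarrow> crosses V (Y \<inter> A) e \<or> crosses V (Y - A) e) \<and>
             \<not> (crosses V (Y \<inter> A) e \<and> crosses V (Y - A) e)"
    by (auto simp: crosses_def)
qed

lemma cut_deg_extend:
  assumes sep: "\<forall>(p, q)\<in>set G. p \<in> V \<and> q \<in> V \<and> (p \<in> A \<longleftrightarrow> q \<in> A)" and Y: "Y \<subseteq> A"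
  shows "cut_deg V G (Y \<union> (V - A)) = cut_deg V G Y"
proof (rule cut_deg_cong)
  fix e assume "e \<in> set G"
  with sep obtain p q where "e = (p, q)" "p \<in> V" "q \<in> V" "p \<in> A \<longleftrightarrow> q \<in> A" by auto
  then show "crosses V (Y \<union> (V - A)) e \<longleftrightarrow> crosses V Y e" using Y by (auto simp: crosses_def)
qed

(* Covering depends only on the multiset of (undirected) edges; this lets the induction
   work with the chosen edge in front of the list. *)
lemma covers_move_front: "covers V R (H1 @ e # H2) \<longleftrightarrow> covers V R (e # H1 @ H2)"
  by (simp add: covers_def cut_deg_append cut_deg_Cons)

lemma covers_swap_front: "covers V R (prod.swap e # H) \<longleftrightarrow> covers V R (e # H)"
  by (simp add: covers_def cut_deg_Cons crosses_swap)

lemma orientable_move_front: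
  assumes "orientable V R (e # H1 @ H2)"
  shows "orientable V R (H1 @ e # H2)"
proof -
  obtain D where D: "is_orientation (e # H1 @ H2) D"
    and reach: "\<forall>u\<in>V. \<forall>v\<in>V. R u v \<longrightarrow> (u, v) \<in> (set D)\<^sup>*"
    using assms unfolding orientable_def by blast
  then obtain d D1 D2 where D_eq: "D = d # D1 @ D2" and d: "d = e \<or> d = prod.swap e"
    and D1: "list_all2 (\<lambda>e d. d = e \<or> d = prod.swap e) H1 D1"
    and D2: "list_all2 (\<lambda>e d. d = e \<or> d = prod.swap e) H2 D2"
    unfolding is_orientation_def by (auto simp: list_all2_Cons1 list_all2_append1)
  have "is_orientation (H1 @ e # H2) (D1 @ d # D2)"
    using D1 D2 d by (simp add: is_orientation_def list_all2_appendI)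
  moreover have "set (D1 @ d # D2) = set D" by (auto simp: D_eq)
  ultimately show ?thesis using reach unfolding orientable_def by metis
qed

(* Base case: if H consists of loops, every cut has degree 0, so covering forces all
   requirements to be trivial and H itself is a suitable orientation. *)
lemma loops_orientable:
  assumes loops: "\<forall>(p, q)\<in>set H. p = q" and cov: "covers V R H"
  shows "orientable V R H"
  unfolding orientable_def
proof (intro exI conjI ballI impI)
  show "is_orientation H H" by (simp add: is_orientation_def list_all2_refl)
next
  fix u v assume u: "u \<in> V" and v: "v \<in> V" and R: "R u v"
  show "(u, v) \<in> (set H)\<^sup>*"
  proof (rule ccontr)
    assume "(u, v) \<notin> (set H)\<^sup>*"
    then have "u \<noteq> v" by auto
    then have "1 \<le> demand V R {u}" using v R by (auto simp: demand_def leaves_def)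
    moreover have "cut_deg V H {u} = 0"
      by (rule cut_deg_zero) (use loops in \<open>auto simp: crosses_def\<close>)
    ultimately show False using cov u by (auto simp: covers_def)
  qed
qed

definition undirected :: "('a \<times> 'a) list \<Rightarrow> ('a \<times> 'a) set" where
  "undirected G = set G \<union> (set G)\<inverse>"

definition bridge_req :: "'a set \<Rightarrow> ('a \<Rightarrow> 'a \<Rightarrow> bool) \<Rightarrow> 'a set \<Rightarrow> 'a \<Rightarrow> 'a \<Rightarrow> 'a \<Rightarrow> 'a \<Rightarrow> bool" where
  "bridge_req V R A x y u v \<longleftrightarrow>
     ((u \<in> A \<longleftrightarrow> v \<in> A) \<and> R u v) \<or> (u \<in> A \<and> v = x \<and> (\<exists>w\<in>V - A. R u w))
     \<or> (u = y \<and> v \<in> V - A \<and> (\<exists>w\<in>A. R w v))"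

lemma bridge_demand_inside:
  assumes Y: "Y \<subseteq> A" and x: "x \<in> A" and y: "y \<notin> A"
  shows "demand V (bridge_req V R A x y) Y \<le> demand V R (if x \<in> Y then Y \<union> (V - A) else Y)"
    (is "_ \<le> demand V R ?Z")
proof (rule demand_mono)
  assume "leaves V (bridge_req V R A x y) Y"
  then obtain u v where u: "u \<in> Y" and v: "v \<in> V - Y" and uv: "bridge_req V R A x y u v"
    unfolding leaves_def by blast
  have "u \<in> A" using u Y by blast
  with uv y consider "v \<in> A" "R u v" | w where "v = x" "w \<in> V - A" "R u w"
    unfolding bridge_req_def by blast
  then show "leaves V R ?Z"
  proof cases
    case 1 then show ?thesis using u v by (intro leaves_witness[of u _ v]) auto
  next
    case 2 then show ?thesis using u v Y by (intro leaves_witness[of u _ w]) auto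
  qed
next
  assume "leaves V (bridge_req V R A x y)\<inverse>\<inverse> Y"
  then obtain u v where u: "u \<in> Y" and v: "v \<in> V - Y" and vu: "bridge_req V R A x y v u"
    unfolding leaves_def by auto
  have "u \<in> A" using u Y by blast
  with vu y consider "v \<in> A" "R v u" | w where "u = x" "v \<in> A" "w \<in> V - A" "R v w"
    unfolding bridge_req_def by blast
  then show "leaves V R\<inverse>\<inverse> ?Z"
  proof cases
    case 1 then show ?thesis using u v by (intro leaves_witness[of u _ v]) auto
  next
    case 2 then show ?thesis using u v Y by (intro leaves_witness[of w _ v]) auto
  qed
qed

lemma bridge_demand_outside:
  assumes Y: "Y \<subseteq> V - A" and AV: "A \<subseteq> V" and x: "x \<in> A" and y: "y \<notin> A"
  shows "demand V (bridge_req V R A x y) Y \<le> demand V R (if y \<in> Y then Y \<union> A else Y)"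
    (is "_ \<le> demand V R ?Z")
proof (rule demand_mono)
  assume "leaves V (bridge_req V R A x y) Y"
  then obtain u v where u: "u \<in> Y" and v: "v \<in> V - Y" and uv: "bridge_req V R A x y u v"
    unfolding leaves_def by blast
  have "u \<notin> A" using u Y by blast
  with uv x consider "v \<notin> A" "R u v" | w where "u = y" "v \<in> V - A" "w \<in> A" "R w v"
    unfolding bridge_req_def by blast
  then show "leaves V R ?Z"
  proof cases
    case 1 then show ?thesis using u v Y by (intro leaves_witness[of u _ v]) auto
  next
    case 2 then show ?thesis using u v Y AV by (intro leaves_witness[of w _ v]) auto
  qed
next
  assume "leaves V (bridge_req V R A x y)\<inverse>\<inverse> Y"
  then obtain u v where u: "u \<in> Y" and v: "v \<in> V - Y" and vu: "bridge_req V R A x y v u"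
    unfolding leaves_def by auto
  have "u \<notin> A" using u Y by blast
  with vu x consider "v \<notin> A" "R v u" | w where "v = y" "w \<in> A" "R w u"
    unfolding bridge_req_def by blast
  then show "leaves V R\<inverse>\<inverse> ?Z"
  proof cases
    case 1 then show ?thesis using u v by (intro leaves_witness[of u _ v]) auto
  next
    case 2 then show ?thesis using u v Y AV by (intro leaves_witness[of u _ w]) auto
  qed
qed

(* bridge_req never crosses A, so a cut's demand splits over its two sides. *)
lemma bridge_demand_split:
  assumes x: "x \<in> A" and y: "y \<notin> A"
  shows "demand V (bridge_req V R A x y) Y \<le>
     demand V (bridge_req V R A x y) (Y \<inter> A) + demand V (bridge_req V R A x y) (Y - A)"
proof -
  have within: "u \<in> A \<longleftrightarrow> v \<in> A" if "bridge_req V R A x y u v" for u v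
    using that x y unfolding bridge_req_def by blast
  show ?thesis
  proof (rule demand_subadditive)
    assume "leaves V (bridge_req V R A x y) Y"
    then obtain u v where "u \<in> Y" "v \<in> V - Y" "bridge_req V R A x y u v" unfolding leaves_def by blast
    then show "leaves V (bridge_req V R A x y) (Y \<inter> A) \<or> leaves V (bridge_req V R A x y) (Y - A)"
      using within by (cases "u \<in> A") (blast intro: leaves_witness)+
  next
    assume "leaves V (bridge_req V R A x y)\<inverse>\<inverse> Y"
    then obtain u v where "u \<in> Y" "v \<in> V - Y" "bridge_req V R A x y v u" unfolding leaves_def by auto
    then show "leaves V (bridge_req V R A x y)\<inverse>\<inverse> (Y \<inter> A) \<or> leaves V (bridge_req V R A x y)\<inverse>\<inverse> (Y - A)"
      using within by (cases "u \<in> A") (blast intro: leaves_witness)+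
  qed
qed

(* Cuts inside A: compare with the cut enlarged by V - A when it contains x, which the bridge
   does not cross and which has the same crossing edges of G. *)
lemma bridge_req_inside:
  assumes AV: "A \<subseteq> V" and x: "x \<in> A" and y: "y \<in> V - A"
    and sep: "\<forall>(p, q)\<in>set G. p \<in> V \<and> q \<in> V \<and> (p \<in> A \<longleftrightarrow> q \<in> A)"
    and cov: "covers V R ((x, y) # G)" and Y: "Y \<subseteq> A"
  shows "demand V (bridge_req V R A x y) Y \<le> cut_deg V G Y"
proof -
  let ?Z = "if x \<in> Y then Y \<union> (V - A) else Y"
  have "demand V (bridge_req V R A x y) Y \<le> demand V R ?Z"
    using bridge_demand_inside[OF Y x] y by simp
  also have "\<dots> \<le> cut_deg V ((x, y) # G) ?Z"
  proof -
    have "?Z \<subseteq> V" using AV Y by auto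
    then show ?thesis using cov unfolding covers_def by blast
  qed
  also have "\<dots> = cut_deg V G Y"
  proof -
    have "\<not> crosses V ?Z (x, y)" using x y Y by (auto simp: crosses_def)
    moreover have "cut_deg V G ?Z = cut_deg V G Y" using cut_deg_extend[OF sep Y] by simp
    ultimately show ?thesis by (simp add: cut_deg_Cons)
  qed
  finally show ?thesis .
qed

(* Cuts outside A: compare with the cut enlarged by A when it contains y. *)
lemma bridge_req_outside:
  assumes AV: "A \<subseteq> V" and x: "x \<in> A" and y: "y \<in> V - A"
    and sep: "\<forall>(p, q)\<in>set G. p \<in> V \<and> q \<in> V \<and> (p \<in> A \<longleftrightarrow> q \<in> A)"
    and cov: "covers V R ((x, y) # G)" and Y: "Y \<subseteq> V - A"
  shows "demand V (bridge_req V R A x y) Y \<le> cut_deg V G Y"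
proof -
  let ?Z = "if y \<in> Y then Y \<union> A else Y"
  have sep': "\<forall>(p, q)\<in>set G. p \<in> V \<and> q \<in> V \<and> (p \<in> V - A \<longleftrightarrow> q \<in> V - A)"
    using sep by auto
  have "demand V (bridge_req V R A x y) Y \<le> demand V R ?Z"
    using bridge_demand_outside[OF Y AV x] y by simp
  also have "\<dots> \<le> cut_deg V ((x, y) # G) ?Z"
  proof -
    have "?Z \<subseteq> V" using AV Y by auto
    then show ?thesis using cov unfolding covers_def by blast
  qed
  also have "\<dots> = cut_deg V G Y"
  proof -
    have "\<not> crosses V ?Z (x, y)" using x y Y AV by (auto simp: crosses_def)
    moreover have "Y \<union> (V - (V - A)) = Y \<union> A" using AV by blast
    then have "cut_deg V G ?Z = cut_deg V G Y" using cut_deg_extend[OF sep' Y] by simp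
    ultimately show ?thesis by (simp add: cut_deg_Cons)
  qed
  finally show ?thesis .
qed

(* Key step of the bridge case: deleting the bridge preserves covering for the modified
   requirements, since every cut splits into its parts on the two sides of the bridge. *)
lemma bridge_req_covers:
  assumes AV: "A \<subseteq> V" and x: "x \<in> A" and y: "y \<in> V - A"
    and sep: "\<forall>(p, q)\<in>set G. p \<in> V \<and> q \<in> V \<and> (p \<in> A \<longleftrightarrow> q \<in> A)"
    and cov: "covers V R ((x, y) # G)"
  shows "covers V (bridge_req V R A x y) G"
  unfolding covers_def
proof (intro allI impI)
  fix Y assume "Y \<subseteq> V"
  let ?R = "bridge_req V R A x y"
  have "demand V ?R Y \<le> demand V ?R (Y \<inter> A) + demand V ?R (Y - A)"
    using bridge_demand_split[OF x] y by simp
  also have "\<dots> \<le> cut_deg V G (Y \<inter> A) + cut_deg V G (Y - A)"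
    by (intro add_mono bridge_req_inside[OF AV x y sep cov] bridge_req_outside[OF AV x y sep cov])
      (use \<open>Y \<subseteq> V\<close> in auto)
  also have "\<dots> = cut_deg V G Y" by (rule cut_deg_sides[OF sep, symmetric])
  finally show "demand V ?R Y \<le> cut_deg V G Y" .
qed

lemma bridge_req_paths:
  assumes AV: "A \<subseteq> V" and x: "x \<in> A" and y: "y \<in> V - A" and no_in: "\<not> leaves V R\<inverse>\<inverse> A"
    and reach: "\<forall>u\<in>V. \<forall>v\<in>V. bridge_req V R A x y u v \<longrightarrow> (u, v) \<in> (set D)\<^sup>*"
  shows "\<forall>u\<in>V. \<forall>v\<in>V. R u v \<longrightarrow> (u, v) \<in> (set ((x, y) # D))\<^sup>*"
proof (intro ballI impI)
  fix u v assume u: "u \<in> V" and v: "v \<in> V" and R: "R u v"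
  have mono: "(set D)\<^sup>* \<subseteq> (set ((x, y) # D))\<^sup>*" by (rule rtrancl_mono) auto
  show "(u, v) \<in> (set ((x, y) # D))\<^sup>*"
  proof (cases "u \<in> A \<longleftrightarrow> v \<in> A")
    case True
    then show ?thesis using reach u v R mono by (auto simp: bridge_req_def)
  next
    case False
    then have "u \<in> A" "v \<in> V - A" using no_in u v R by (auto simp: leaves_def)
    then have "(u, x) \<in> (set D)\<^sup>*" "(y, v) \<in> (set D)\<^sup>*"
      using reach u v R x y AV by (auto simp: bridge_req_def)
    then have "(u, x) \<in> (set ((x, y) # D))\<^sup>*" "(y, v) \<in> (set ((x, y) # D))\<^sup>*" using mono by auto
    then show ?thesis by (meson list.set_intros(1) rtrancl.rtrancl_into_rtrancl rtrancl_trans)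
  qed
qed

lemma orient_bridge:
  assumes AV: "A \<subseteq> V" and x: "x \<in> A" and y: "y \<in> V - A"
    and sep: "\<forall>(p, q)\<in>set G. p \<in> V \<and> q \<in> V \<and> (p \<in> A \<longleftrightarrow> q \<in> A)"
    and no_in: "\<not> leaves V R\<inverse>\<inverse> A"
    and e: "e = (x, y) \<or> e = (y, x)" and cov: "covers V R (e # G)"
    and IH: "covers V (bridge_req V R A x y) G \<Longrightarrow> orientable V (bridge_req V R A x y) G"
  shows "orientable V R (e # G)"
proof -
  have "covers V R ((x, y) # G)" using cov e covers_swap_front[of V R "(x, y)" G] by auto
  then have "orientable V (bridge_req V R A x y) G"
    using IH bridge_req_covers[OF AV x y sep] by blast
  then obtain D where D: "is_orientation G D"
    and reach: "\<forall>u\<in>V. \<forall>v\<in>V. bridge_req V R A x y u v \<longrightarrow> (u, v) \<in> (set D)\<^sup>*"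
    unfolding orientable_def by blast
  have "is_orientation (e # G) ((x, y) # D)" using D e by (auto simp: is_orientation_def)
  with bridge_req_paths[OF AV x y no_in reach] show ?thesis unfolding orientable_def by blast
qed

(* A bridge ab forms a cut of degree 1, so requirements cross it in one direction only;
   orienting it that way reduces to the graph without the bridge. *)
lemma bridge_case:
  assumes edges: "\<forall>(p, q)\<in>set ((a, b) # G). p \<in> V \<and> q \<in> V"
    and cov: "covers V R ((a, b) # G)"
    and bridge: "(a, b) \<notin> (undirected G)\<^sup>*"
    and IH: "\<And>R'. covers V R' G \<Longrightarrow> orientable V R' G"
  shows "orientable V R ((a, b) # G)"
proof -
  define A where "A = {v \<in> V. (a, v) \<in> (undirected G)\<^sup>*}"
  have AV: "A \<subseteq> V" and a: "a \<in> A" and b: "b \<in> V - A"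
    using edges bridge by (auto simp: A_def)
  have sep: "\<forall>(p, q)\<in>set G. p \<in> V \<and> q \<in> V \<and> (p \<in> A \<longleftrightarrow> q \<in> A)"
  proof (intro ballI, clarify)
    fix p q assume pq: "(p, q) \<in> set G"
    then have "p \<in> V" "q \<in> V" using edges by auto
    moreover have "(p, q) \<in> undirected G" "(q, p) \<in> undirected G"
      using pq by (auto simp: undirected_def)
    ultimately show "p \<in> V \<and> q \<in> V \<and> (p \<in> A \<longleftrightarrow> q \<in> A)"
      unfolding A_def by (blast intro: rtrancl_into_rtrancl)
  qed
  have "cut_deg V G A = 0"
  proof (rule cut_deg_zero)
    fix e assume "e \<in> set G"
    with sep show "\<not> crosses V A e" by (auto simp: crosses_def)
  qed
  then have "cut_deg V ((a, b) # G) A = 1" using a b by (simp add: cut_deg_Cons crosses_def)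
  then have "demand V R A \<le> 1" using cov AV unfolding covers_def by metis
  then have "\<not> leaves V R\<inverse>\<inverse> A \<or> \<not> leaves V R\<inverse>\<inverse> (V - A)"
    using leaves_complement[OF AV] by (auto simp: demand_def)
  then show ?thesis
  proof
    assume "\<not> leaves V R\<inverse>\<inverse> A"
    then show ?thesis by (rule orient_bridge[OF AV a b sep _ _ cov IH]) simp
  next
    assume no_in: "\<not> leaves V R\<inverse>\<inverse> (V - A)"
    have "b \<in> V - A" "a \<in> V - (V - A)" using a b AV by auto
    moreover have "\<forall>(p, q)\<in>set G. p \<in> V \<and> q \<in> V \<and> (p \<in> V - A \<longleftrightarrow> q \<in> V - A)"
      using sep by auto
    ultimately show ?thesis by (intro orient_bridge[OF _ _ _ _ no_in _ cov IH]) auto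
  qed
qed

lemma walk_relpow:
  assumes walk: "\<forall>k<m. (f k, f (Suc k)) \<in> E" and "i \<le> j" and "j \<le> m"
  shows "(f i, f j) \<in> E ^^ (j - i)"
  using assms(2,3)
proof (induction j)
  case 0
  then show ?case by simp
next
  case (Suc j)
  show ?case
  proof (cases "i = Suc j")
    case True
    then show ?thesis by simp
  next
    case False
    then have "(f i, f j) \<in> E ^^ (j - i)" "(f j, f (Suc j)) \<in> E" using Suc walk by auto
    then have "(f i, f (Suc j)) \<in> E ^^ Suc (j - i)" by auto
    moreover have "Suc j - i = Suc (j - i)" using False Suc.prems by simp
    ultimately show ?thesis by simp
  qed
qed

lemma walk_rtrancl:
  assumes "\<forall>k<m. (f k, f (Suc k)) \<in> E" and "i \<le> j" and "j \<le> m"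
  shows "(f i, f j) \<in> E\<^sup>*"
  using walk_relpow[OF assms] by (rule relpow_imp_rtrancl)

(* A shortest walk is a path: it visits no vertex twice. *)
lemma shortest_path:
  assumes "(a, b) \<in> E\<^sup>*"
  obtains m f where "f 0 = a" and "f m = b" and "\<forall>k<m. (f k, f (Suc k)) \<in> E"
    and "inj_on f {..m}"
proof -
  have ex: "\<exists>n. (a, b) \<in> E ^^ n" using assms by (simp add: rtrancl_power)
  define m where "m = (LEAST n. (a, b) \<in> E ^^ n)"
  have "(a, b) \<in> E ^^ m" unfolding m_def using ex by (rule LeastI_ex)
  then obtain f where f0: "f 0 = a" and fm: "f m = b" and walk: "\<forall>k<m. (f k, f (Suc k)) \<in> E"
    using relpow_fun_conv by metis
  have "inj_on f {..m}"
  proof (rule linorder_inj_onI')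
    fix i j assume i: "i \<in> {..m}" and j: "j \<in> {..m}" and ij: "i < j"
    show "f i \<noteq> f j"
    proof
      assume eq: "f i = f j"
      have "(a, f i) \<in> E ^^ i" using walk_relpow[OF walk, of 0 i] f0 i by simp
      moreover have "(f i, b) \<in> E ^^ (m - j)" using walk_relpow[OF walk, of j m] fm eq j by simp
      ultimately have "(a, b) \<in> E ^^ (i + (m - j))" by (auto simp: relpow_add)
      moreover have "i + (m - j) < m" using ij j by simp
      ultimately show False using not_less_Least unfolding m_def by blast
    qed
  qed
  with f0 fm walk that show thesis by blast
qed

definition contract_req :: "'a set \<Rightarrow> ('a \<Rightarrow> 'b) \<Rightarrow> ('a \<Rightarrow> 'a \<Rightarrow> bool) \<Rightarrow> 'b \<Rightarrow> 'b \<Rightarrow> bool" where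
  "contract_req V \<phi> R x y \<longleftrightarrow> (\<exists>u\<in>V. \<exists>v\<in>V. \<phi> u = x \<and> \<phi> v = y \<and> R u v)"

(* Contraction preserves covering: a cut of the image pulls back to a cut of V with the
   same crossing edges and at least the same demand. *)
lemma covers_contract:
  assumes edges: "\<forall>(p, q)\<in>set H. p \<in> V \<and> q \<in> V" and cov: "covers V R H"
  shows "covers (\<phi> ` V) (contract_req V \<phi> R) (map (map_prod \<phi> \<phi>) H)"
  unfolding covers_def
proof (intro allI impI)
  fix X assume "X \<subseteq> \<phi> ` V"
  define Y where "Y = {v \<in> V. \<phi> v \<in> X}"
  have "demand (\<phi> ` V) (contract_req V \<phi> R) X \<le> demand V R Y"
  proof (rule demand_mono)
    assume "leaves (\<phi> ` V) (contract_req V \<phi> R) X"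
    then obtain u v where "u \<in> V" "v \<in> V" "\<phi> u \<in> X" "\<phi> v \<notin> X" "R u v"
      by (auto simp: leaves_def contract_req_def)
    then show "leaves V R Y" by (intro leaves_witness[of u _ v]) (auto simp: Y_def)
  next
    assume "leaves (\<phi> ` V) (contract_req V \<phi> R)\<inverse>\<inverse> X"
    then obtain u v where "u \<in> V" "v \<in> V" "\<phi> u \<in> X" "\<phi> v \<notin> X" "R v u"
      by (auto simp: leaves_def contract_req_def)
    then show "leaves V R\<inverse>\<inverse> Y" by (intro leaves_witness[of u _ v]) (auto simp: Y_def)
  qed
  also have "\<dots> \<le> cut_deg V H Y" using cov by (auto simp: covers_def Y_def)
  also have "\<dots> = cut_deg (\<phi> ` V) (map (map_prod \<phi> \<phi>) H) X"
  proof -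
    have "crosses V Y e \<longleftrightarrow> crosses (\<phi> ` V) X (map_prod \<phi> \<phi> e)" if "e \<in> set H" for e
      using that edges by (cases e) (auto simp: crosses_def Y_def)
    then show ?thesis unfolding cut_deg_filter
      by (auto simp: filter_map intro!: arg_cong[of _ _ length] filter_cong)
  qed
  finally show "demand (\<phi> ` V) (contract_req V \<phi> R) X \<le> cut_deg (\<phi> ` V) (map (map_prod \<phi> \<phi>) H) X" .
qed

lemma lift_reachable:
  assumes arcs: "\<And>x y. (x, y) \<in> R' \<Longrightarrow> x \<noteq> y \<Longrightarrow> \<exists>p q. (p, q) \<in> R \<and> \<phi> p = x \<and> \<phi> q = y"
    and fibres: "\<And>p q. \<phi> p = \<phi> q \<Longrightarrow> (p, q) \<in> R\<^sup>*"
    and reach: "(\<phi> u, \<phi> w) \<in> R'\<^sup>*"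
  shows "(u, w) \<in> R\<^sup>*"
proof -
  have "\<exists>v. \<phi> v = y \<and> (u, v) \<in> R\<^sup>*" if "(\<phi> u, y) \<in> R'\<^sup>*" for y
    using that
  proof (induction rule: rtrancl_induct)
    case base
    then show ?case by blast
  next
    case (step y z)
    then obtain v where v: "\<phi> v = y" "(u, v) \<in> R\<^sup>*" by blast
    show ?case
    proof (cases "y = z")
      case True
      then show ?thesis using v by blast
    next
      case False
      then obtain p q where pq: "(p, q) \<in> R" "\<phi> p = y" "\<phi> q = z" using arcs step.hyps(2) by blast
      have "(v, p) \<in> R\<^sup>*" using fibres v pq by simp
      then have "(u, q) \<in> R\<^sup>*" using v(2) pq(1) by (meson rtrancl.rtrancl_into_rtrancl rtrancl_trans)
      then show ?thesis using pq by blast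
    qed
  qed
  then obtain v where "\<phi> v = \<phi> w" "(u, v) \<in> R\<^sup>*" using reach by blast
  then show ?thesis using fibres by (meson rtrancl_trans)
qed

definition orient_by :: "('a \<times> 'a \<Rightarrow> bool) \<Rightarrow> ('a \<Rightarrow> 'b) \<Rightarrow> 'a \<times> 'a \<Rightarrow> 'b \<times> 'b \<Rightarrow> 'a \<times> 'a" where
  "orient_by P \<phi> e d =
     (if P e then e else if P (prod.swap e) then prod.swap e
      else if d = map_prod \<phi> \<phi> e then e else prod.swap e)"

lemma orient_by_list:
  fixes P :: "'a \<times> 'a \<Rightarrow> bool" and \<phi> :: "'a \<Rightarrow> 'b"
  assumes Dc: "is_orientation (map (map_prod \<phi> \<phi>) G) Dc"
    and P_loop: "\<And>p q. P (p, q) \<Longrightarrow> \<phi> p = \<phi> q"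
  defines "D \<equiv> map2 (orient_by P \<phi>) G Dc"
  shows "is_orientation G D"
    and "\<And>e e'. e \<in> set G \<Longrightarrow> e' = e \<or> e' = prod.swap e \<Longrightarrow> P e' \<Longrightarrow>
            \<not> (P e \<and> P (prod.swap e)) \<Longrightarrow> e' \<in> set D"
    and "\<And>x y. (x, y) \<in> set Dc \<Longrightarrow> x \<noteq> y \<Longrightarrow> \<exists>p q. (p, q) \<in> set D \<and> \<phi> p = x \<and> \<phi> q = y"
proof -
  have rel: "list_all2 (\<lambda>e d. d = map_prod \<phi> \<phi> e \<or> d = prod.swap (map_prod \<phi> \<phi> e)) G Dc"
    using Dc by (simp add: is_orientation_def list_all2_map1)
  then have len: "length G = length Dc" by (rule list_all2_lengthD)
  have in_D: "(e, d) \<in> set (zip G Dc) \<Longrightarrow> orient_by P \<phi> e d \<in> set D" for e d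
    unfolding D_def by force
  show "is_orientation G D"
    using len by (auto simp: is_orientation_def list_all2_conv_all_nth D_def orient_by_def)
  show "e' \<in> set D"
    if e: "e \<in> set G" and choice: "e' = e \<or> e' = prod.swap e" "P e'" "\<not> (P e \<and> P (prod.swap e))"
    for e e'
  proof -
    obtain d where "(e, d) \<in> set (zip G Dc)" using in_set_impl_in_set_zip1[OF len e] by blast
    moreover have "orient_by P \<phi> e d = e'" using choice by (auto simp: orient_by_def)
    ultimately show ?thesis using in_D by blast
  qed
  show "\<exists>p q. (p, q) \<in> set D \<and> \<phi> p = x \<and> \<phi> q = y" if d: "(x, y) \<in> set Dc" and "x \<noteq> y" for x y
  proof -
    obtain e where ed: "(e, (x, y)) \<in> set (zip G Dc)" using in_set_impl_in_set_zip2[OF len d] by blast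
    then have image: "(x, y) = map_prod \<phi> \<phi> e \<or> (x, y) = prod.swap (map_prod \<phi> \<phi> e)"
      using rel by (auto simp: list_all2_iff)
    then have "\<not> P e \<and> \<not> P (prod.swap e)" using P_loop \<open>x \<noteq> y\<close> by (cases e) auto
    then have lifted: "map_prod \<phi> \<phi> (orient_by P \<phi> e (x, y)) = (x, y)"
      using image by (cases e) (auto simp: orient_by_def)
    obtain p q where "orient_by P \<phi> e (x, y) = (p, q)" by fastforce
    then show ?thesis using in_D[OF ed] lifted by auto
  qed
qed

lemma closed_walk_strong:
  assumes walk: "\<forall>k<m. (f k, f (Suc k)) \<in> R" and closing: "(f m, f 0) \<in> R"
    and p: "p \<in> f ` {..m}" and q: "q \<in> f ` {..m}"
  shows "(p, q) \<in> R\<^sup>*"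
proof -
  obtain i j where "i \<le> m" "j \<le> m" "p = f i" "q = f j" using p q by auto
  then have "(p, f m) \<in> R\<^sup>*" "(f 0, q) \<in> R\<^sup>*" using walk_rtrancl[OF walk] by auto
  with closing show ?thesis by (meson rtrancl.rtrancl_into_rtrancl rtrancl_trans)
qed

lemma collapse_fibres_strong:
  assumes walk: "\<forall>k<m. (f k, f (Suc k)) \<in> R" and closing: "(f m, f 0) \<in> R"
    and \<phi>: "\<And>p. \<phi> p = (if p \<in> f ` {..m} then f 0 else p)" and pq: "\<phi> p = \<phi> q"
  shows "(p, q) \<in> R\<^sup>*"
proof (cases "p \<in> f ` {..m} \<or> q \<in> f ` {..m}")
  case True
  have "f 0 \<in> f ` {..m}" by simp
  with True pq have "p \<in> f ` {..m}" "q \<in> f ` {..m}" unfolding \<phi> by (auto split: if_splits)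
  then show ?thesis by (rule closed_walk_strong[OF walk closing])
next
  case False
  then show ?thesis using pq unfolding \<phi> by simp
qed

lemma cycle_orientation:
  assumes walk: "\<forall>k<m. (f k, f (Suc k)) \<in> undirected G" and inj: "inj_on f {..m}"
    and fm: "f m = b" and const: "\<And>k. k \<le> m \<Longrightarrow> \<phi> (f k) = \<phi> a"
    and Dc: "is_orientation (map (map_prod \<phi> \<phi>) ((a, b) # G)) Dc"
  obtains D where "is_orientation ((a, b) # G) D"
    and "\<forall>k<m. (f k, f (Suc k)) \<in> set D" and "(b, a) \<in> set D"
    and "\<And>x y. (x, y) \<in> set Dc \<Longrightarrow> x \<noteq> y \<Longrightarrow> \<exists>p q. (p, q) \<in> set D \<and> \<phi> p = x \<and> \<phi> q = y"
proof -
  define step where "step e \<longleftrightarrow> (\<exists>k<m. e = (f k, f (Suc k)))" for e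
  have step_loop: "\<phi> p = \<phi> q" if "step (p, q)" for p q
    using that const by (auto simp: step_def)
  have not_reversed: "\<not> (step e \<and> step (prod.swap e))" for e
  proof
    assume "step e \<and> step (prod.swap e)"
    then obtain k l where "k < m" "l < m" "f k = f (Suc l)" "f (Suc k) = f l"
      by (auto simp: step_def)
    then have "k = Suc l" "Suc k = l" using inj by (auto dest: inj_onD)
    then show False by simp
  qed
  have "\<phi> b = \<phi> a" using const[of m] fm by simp
  then obtain Dc' where Dc_eq: "Dc = (\<phi> a, \<phi> a) # Dc'"
    and Dc': "is_orientation (map (map_prod \<phi> \<phi>) G) Dc'"
    using Dc by (auto simp: is_orientation_def list_all2_Cons1)
  note lifted = orient_by_list[where P = step, OF Dc' step_loop]
  define D where "D = (b, a) # map2 (orient_by step \<phi>) G Dc'"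
  have "is_orientation ((a, b) # G) D" using lifted(1) by (simp add: D_def is_orientation_def)
  moreover have "(f k, f (Suc k)) \<in> set D" if k: "k < m" for k
  proof -
    obtain e where "e \<in> set G" "(f k, f (Suc k)) = e \<or> (f k, f (Suc k)) = prod.swap e"
      using walk k by (auto simp: undirected_def)
    moreover have "step (f k, f (Suc k))" using k by (auto simp: step_def)
    ultimately show ?thesis using lifted(2) not_reversed by (auto simp: D_def)
  qed
  moreover have "\<exists>p q. (p, q) \<in> set D \<and> \<phi> p = x \<and> \<phi> q = y"
    if "(x, y) \<in> set Dc" and "x \<noteq> y" for x y
    using that lifted(3)[of x y] Dc_eq by (auto simp: D_def)
  ultimately show thesis using that by (auto simp: D_def)
qed

definition proper_edges :: "('a \<times> 'a) list \<Rightarrow> nat" where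
  "proper_edges H = length (filter (\<lambda>(p, q). p \<noteq> q) H)"

lemma proper_edges_map_le: "proper_edges (map (map_prod \<phi> \<phi>) H) \<le> proper_edges H"
  by (induction H) (auto simp: proper_edges_def)

lemma cycle_case:
  fixes G :: "('a \<times> 'a) list"
  assumes edges: "\<forall>(p, q)\<in>set ((a, b) # G). p \<in> V \<and> q \<in> V"
    and cov: "covers V R ((a, b) # G)"
    and conn: "(a, b) \<in> (undirected G)\<^sup>*" and ab: "a \<noteq> b"
    and IH: "\<And>V' R' (H' :: ('a \<times> 'a) list). proper_edges H' < proper_edges ((a, b) # G) \<Longrightarrow>
               \<forall>(p, q)\<in>set H'. p \<in> V' \<and> q \<in> V' \<Longrightarrow> covers V' R' H' \<Longrightarrow> orientable V' R' H'"
  shows "orientable V R ((a, b) # G)"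
proof -
  obtain m f where f0: "f 0 = a" and fm: "f m = b"
    and walk: "\<forall>k<m. (f k, f (Suc k)) \<in> undirected G" and inj: "inj_on f {..m}"
    by (rule shortest_path[OF conn])
  define \<phi> where "\<phi> p = (if p \<in> f ` {..m} then a else p)" for p
  have const: "\<phi> (f k) = \<phi> a" if "k \<le> m" for k
    using that f0 by (auto simp: \<phi>_def)
  let ?Hc = "map (map_prod \<phi> \<phi>) ((a, b) # G)"
  have "proper_edges ?Hc < proper_edges ((a, b) # G)"
    using proper_edges_map_le[of \<phi> G] ab const[of 0] const[of m] f0 fm
    by (simp add: proper_edges_def)
  moreover have "\<forall>(p, q)\<in>set ?Hc. p \<in> \<phi> ` V \<and> q \<in> \<phi> ` V" using edges by auto
  moreover have "covers (\<phi> ` V) (contract_req V \<phi> R) ?Hc" by (rule covers_contract[OF edges cov])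
  ultimately have "orientable (\<phi> ` V) (contract_req V \<phi> R) ?Hc" by (rule IH)
  then obtain Dc where Dc: "is_orientation ?Hc Dc"
    and reach_c: "\<forall>x\<in>\<phi> ` V. \<forall>y\<in>\<phi> ` V. contract_req V \<phi> R x y \<longrightarrow> (x, y) \<in> (set Dc)\<^sup>*"
    unfolding orientable_def by blast
  obtain D where D: "is_orientation ((a, b) # G) D"
    and cycle: "\<forall>k<m. (f k, f (Suc k)) \<in> set D" and closing: "(b, a) \<in> set D"
    and arcs: "\<And>x y. (x, y) \<in> set Dc \<Longrightarrow> x \<noteq> y \<Longrightarrow> \<exists>p q. (p, q) \<in> set D \<and> \<phi> p = x \<and> \<phi> q = y"
    using cycle_orientation[OF walk inj fm const Dc] by blast
  have collapse: "\<phi> p = (if p \<in> f ` {..m} then f 0 else p)" for p using f0 by (simp add: \<phi>_def)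
  have "(f m, f 0) \<in> set D" using closing f0 fm by simp
  then have fibres: "(p, q) \<in> (set D)\<^sup>*" if "\<phi> p = \<phi> q" for p q
    using collapse_fibres_strong[OF cycle _ collapse that] by blast
  have "(u, v) \<in> (set D)\<^sup>*" if "u \<in> V" "v \<in> V" "R u v" for u v
  proof (rule lift_reachable[where R' = "set Dc", OF arcs fibres])
    show "(\<phi> u, \<phi> v) \<in> (set Dc)\<^sup>*" using that reach_c by (auto simp: contract_req_def)
  qed
  with D show ?thesis unfolding orientable_def by blast
qed

lemma covers_imp_orientable:
  assumes "\<forall>(p, q)\<in>set H. p \<in> V \<and> q \<in> V" and "covers V R H"
  shows "orientable V R H"
  using assms
proof (induction "proper_edges H" arbitrary: V R H rule: less_induct)
  case less
  show ?case
  proof (cases "\<exists>(a, b)\<in>set H. a \<noteq> b")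
    case False
    then have "\<forall>(p, q)\<in>set H. p = q" by auto
    then show ?thesis using less.prems(2) by (rule loops_orientable)
  next
    case True
    then obtain H1 a b H2 where H: "H = H1 @ (a, b) # H2" and ab: "a \<noteq> b"
      by (auto dest: split_list)
    let ?G = "H1 @ H2"
    have edges: "\<forall>(p, q)\<in>set ((a, b) # ?G). p \<in> V \<and> q \<in> V" using less.prems(1) H by auto
    have cov: "covers V R ((a, b) # ?G)" using less.prems(2) H covers_move_front by metis
    have same: "proper_edges ((a, b) # ?G) = proper_edges H" using H by (simp add: proper_edges_def)
    have "orientable V R ((a, b) # ?G)"
    proof (cases "(a, b) \<in> (undirected ?G)\<^sup>*")
      case True
      show ?thesis
        by (rule cycle_case[OF edges cov True ab], rule less.hyps) (simp_all add: same)
    next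
      case False
      have "proper_edges ?G < proper_edges H" using ab same by (simp add: proper_edges_def)
      then have "\<And>R'. covers V R' ?G \<Longrightarrow> orientable V R' ?G" using less.hyps edges by auto
      then show ?thesis by (rule bridge_case[OF edges cov False])
    qed
    then show ?thesis using H orientable_move_front by simp
  qed
qed

theorem lemma2:
  fixes V :: "'a set" and r :: "'a \<Rightarrow> 'a \<Rightarrow> nat" and H :: "('a \<times> 'a) list"
  assumes "finite V"
    and "\<forall>u\<in>V. \<forall>v\<in>V. r u v \<in> {0, 1}"
    and "\<forall>(a, b) \<in> set H. a \<in> V \<and> b \<in> V"
    and "\<forall>X. X \<subseteq> V \<longrightarrow> cut_deg V H X \<ge> f_r V r X"
  shows "\<exists>D. is_orientation H D \<and> (\<forall>u\<in>V. \<forall>v\<in>V. r u v = 1 \<longrightarrow> has_dipath D u v)"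
proof -
  have "covers V (\<lambda>u v. r u v = 1) H"
    using assms(4) f_r_eq_demand[OF assms(1,2)] by (simp add: covers_def)
  with assms(3) have "orientable V (\<lambda>u v. r u v = 1) H" by (rule covers_imp_orientable)
  then show ?thesis by (simp add: orientable_def has_dipath_def)
qed

end
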